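(* Let $(B,\mathfrak m)$ be a local Prüfer ring such that $\mathfrak m = Z(B)$ and $\mathfrak m^2 \neq 0$ (for instance $B = \mathbb Z/8\mathbb Z$), and let $I := \mathfrak m$. Let $A := B \bowtie I$, let $f : A \to B$ be a surjective ring homomorphism, and let $J := I$. Then $A\bowtie^f J$ is a Prüfer ring and $A \bowtie^f J$ is not a Gaussian ring.
   Context: All rings are commutative with identity. For an ideal $I$ of a ring $B$, $B \bowtie I := \{(b, b+i) : b \in B, i \in I\}\subseteq B\times B$ (amalgamated duplication). For a ring homomorphism $f:A\to B$ and an ideal $J$ of $B$, $A \bowtie^f J := \{(a, f(a)+j) : a \in A, j \in J\}$, a subring of $A\times B$. $Z(B)$ is the set of zero-divisors of $B$. An ideal is regular if it contains a regular element. A ring $R$ is a Prüfer ring if every finitely generated regular ideal of $R$ is invertible. A ring $R$ is Gaussian if $c(gh)=c(g)c(h)$ for all $g,h\in R[x]$, where $c(p)$ is the ideal generated by the coefficients of $p$. *)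

theory Defs
  imports "HOL-Library.Product_Plus" "HOL-Computational_Algebra.Polynomial"
begin

instantiation prod :: (times, times) times
begin
definition times_prod_def: "x * y = (fst x * fst y, snd x * snd y)"
instance ..
end

instantiation prod :: (one, one) one
begin
definition one_prod_def: "1 = (1, 1)"
instance ..
end

lemma fst_mult_prod [simp]: "fst (x * y) = fst x * fst y"
  and snd_mult_prod [simp]: "snd (x * y) = snd x * snd y"
  and fst_one_prod [simp]: "fst 1 = 1" and snd_one_prod [simp]: "snd 1 = 1"
  by (simp_all add: times_prod_def one_prod_def)

instance prod :: (comm_ring_1, comm_ring_1) comm_ring_1
  by standard (simp_all add: prod_eq_iff algebra_simps)

definition sr_subring :: "'a::comm_ring_1 set \<Rightarrow> bool" where
  "sr_subring S \<longleftrightarrow> 0 \<in> S \<and> 1 \<in> S \<and> (\<forall>x\<in>S. \<forall>y\<in>S. x + y \<in> S \<and> x - y \<in> S \<and> x * y \<in> S)"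

definition sr_ideal :: "'a::comm_ring_1 set \<Rightarrow> 'a set \<Rightarrow> bool" where
  "sr_ideal S I \<longleftrightarrow> I \<subseteq> S \<and> 0 \<in> I \<and> (\<forall>x\<in>I. \<forall>y\<in>I. x + y \<in> I) \<and> (\<forall>r\<in>S. \<forall>x\<in>I. r * x \<in> I)"

definition sr_ideal_gen :: "'a::comm_ring_1 set \<Rightarrow> 'a set \<Rightarrow> 'a set" where
  "sr_ideal_gen S X = {y. \<exists>(n::nat) r x. (\<forall>i<n. r i \<in> S \<and> x i \<in> X) \<and> y = (\<Sum>i<n. r i * x i)}"

definition sr_ideal_prod :: "'a::comm_ring_1 set \<Rightarrow> 'a set \<Rightarrow> 'a set \<Rightarrow> 'a set" where
  "sr_ideal_prod S I J = sr_ideal_gen S {a * b | a b. a \<in> I \<and> b \<in> J}"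

definition fin_gen_ideal :: "'a::comm_ring_1 set \<Rightarrow> 'a set \<Rightarrow> bool" where
  "fin_gen_ideal S I \<longleftrightarrow> (\<exists>X. finite X \<and> X \<subseteq> S \<and> I = sr_ideal_gen S X)"

definition maximal_ideal :: "'a::comm_ring_1 set \<Rightarrow> 'a set \<Rightarrow> bool" where
  "maximal_ideal S M \<longleftrightarrow> sr_ideal S M \<and> M \<noteq> S \<and>
     (\<forall>N. sr_ideal S N \<and> M \<subseteq> N \<longrightarrow> N = M \<or> N = S)"

definition local_ring :: "'a::comm_ring_1 set \<Rightarrow> 'a set \<Rightarrow> bool" where
  "local_ring S M \<longleftrightarrow> maximal_ideal S M \<and> (\<forall>N. maximal_ideal S N \<longrightarrow> N = M)"

definition zero_divisors :: "'a::comm_ring_1 set \<Rightarrow> 'a set" where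
  "zero_divisors S = {z \<in> S. \<exists>y\<in>S. y \<noteq> 0 \<and> z * y = 0}"

definition regular :: "'a::comm_ring_1 set \<Rightarrow> 'a \<Rightarrow> bool" where
  "regular S s \<longleftrightarrow> s \<in> S \<and> s \<notin> zero_divisors S"

definition regular_ideal :: "'a::comm_ring_1 set \<Rightarrow> 'a set \<Rightarrow> bool" where
  "regular_ideal S I \<longleftrightarrow> sr_ideal S I \<and> (\<exists>s\<in>I. regular S s)"

text \<open>An ideal I of S is invertible iff I I^{-1} = S in the total ring of quotients,
  where I^{-1} = {x \<in> T(S). x I \<subseteq> S}; i.e. 1 \<in> I I^{-1}.  Writing the elements of I^{-1}
  involved over a common regular denominator s: there are a_i \<in> I and b_i/s \<in> I^{-1}
  (meaning b_i c \<in> s S for all c \<in> I) with \<Sum> a_i b_i / s = 1.\<close>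
definition invertible_ideal :: "'a::comm_ring_1 set \<Rightarrow> 'a set \<Rightarrow> bool" where
  "invertible_ideal S I \<longleftrightarrow> sr_ideal S I \<and>
     (\<exists>s (n::nat) a b. regular S s \<and>
        (\<forall>i<n. a i \<in> I \<and> b i \<in> S \<and> (\<forall>c\<in>I. \<exists>r\<in>S. b i * c = s * r)) \<and>
        (\<Sum>i<n. a i * b i) = s)"

definition pruefer_ring :: "'a::comm_ring_1 set \<Rightarrow> bool" where
  "pruefer_ring S \<longleftrightarrow> (\<forall>I. fin_gen_ideal S I \<and> regular_ideal S I \<longrightarrow> invertible_ideal S I)"

definition content_ideal :: "'a::comm_ring_1 set \<Rightarrow> 'a poly \<Rightarrow> 'a set" where
  "content_ideal S p = sr_ideal_gen S (range (coeff p))"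

definition gaussian_ring :: "'a::comm_ring_1 set \<Rightarrow> bool" where
  "gaussian_ring S \<longleftrightarrow> (\<forall>g h. range (coeff g) \<subseteq> S \<and> range (coeff h) \<subseteq> S \<longrightarrow>
     content_ideal S (g * h) = sr_ideal_prod S (content_ideal S g) (content_ideal S h))"

definition ring_hom_on :: "'a::comm_ring_1 set \<Rightarrow> ('a \<Rightarrow> 'b::comm_ring_1) \<Rightarrow> bool" where
  "ring_hom_on S f \<longleftrightarrow> f 1 = 1 \<and> (\<forall>x\<in>S. \<forall>y\<in>S. f (x + y) = f x + f y \<and> f (x * y) = f x * f y)"

definition amalg_dup :: "'a::comm_ring_1 set \<Rightarrow> 'a set \<Rightarrow> ('a \<times> 'a) set" where
  "amalg_dup B I = {(b, b + i) | b i. b \<in> B \<and> i \<in> I}"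

definition amalg :: "'a::comm_ring_1 set \<Rightarrow> ('a \<Rightarrow> 'b::comm_ring_1) \<Rightarrow> 'b set \<Rightarrow> ('a \<times> 'b) set" where
  "amalg A f J = {(a, f a + j) | a j. a \<in> A \<and> j \<in> J}"

end

theory Submission
  imports Defs
begin

(* Every regular element c = (a, f a + j) of C is a unit.  If the first coordinate of
   a lies outside m, then a is a unit of A, so f a and the last coordinate of c are units of B,
   and c is a unit of C.  Otherwise f a lies in m (by surjectivity f maps the maximal ideal of the
   local ring A into m), so the last coordinate of c is a zero-divisor of B and some (0, z) with
   0 <> z in m kills c.  A ring whose regular elements are units is Pruefer, since its only
   regular ideal is the unit ideal.

   Take p, q in m with pq <> 0 and put g = a + bX, h = c + dX for suitable a, b,
   c, d in C with ac = bd = 0.  In a Gaussian ring ad, a product of content generators, is a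
   multiple of ad + bc, the only nonzero coefficient of gh; comparing the two first coordinates
   of such a relation puts 1 into m. *)

lemma mult_Pair [simp]: "(a, b) * (c, d) = (a * c, b * d)"
  by (simp add: times_prod_def)

lemma one_Pair: "(1::'a::one \<times> 'b::one) = (1, 1)"
  by (simp add: one_prod_def)

lemma sr_subring_UNIV: "sr_subring (UNIV :: 'a::comm_ring_1 set)"
  by (simp add: sr_subring_def)

lemma sr_subring_sum:
  assumes "sr_subring S" and "\<forall>i<n. t i \<in> S"
  shows "(\<Sum>i<(n::nat). t i) \<in> S"
  using assms(2) by (induction n) (use assms(1) in \<open>auto simp: sr_subring_def\<close>)

lemma sr_ideal_closed:
  assumes S: "sr_subring S" and I: "sr_ideal S I"
  shows sr_ideal_zero: "0 \<in> I"
    and sr_ideal_add: "x \<in> I \<Longrightarrow> y \<in> I \<Longrightarrow> x + y \<in> I"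
    and sr_ideal_mult_left: "r \<in> S \<Longrightarrow> x \<in> I \<Longrightarrow> r * x \<in> I"
    and sr_ideal_mult_right: "r \<in> S \<Longrightarrow> x \<in> I \<Longrightarrow> x * r \<in> I"
    and sr_ideal_uminus: "x \<in> I \<Longrightarrow> - x \<in> I"
    and sr_ideal_diff: "x \<in> I \<Longrightarrow> y \<in> I \<Longrightarrow> x - y \<in> I"
proof -
  have add: "x + y \<in> I" if "x \<in> I" "y \<in> I" for x y
    using I that unfolding sr_ideal_def by blast
  have mult: "r * x \<in> I" if "r \<in> S" "x \<in> I" for r x
    using I that unfolding sr_ideal_def by blast
  have "0 - 1 \<in> S" using S unfolding sr_subring_def by blast
  then have neg: "- x \<in> I" if "x \<in> I" for x
    using mult[of "0 - 1" x] that by simp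
  show "0 \<in> I" using I by (simp add: sr_ideal_def)
  show "x \<in> I \<Longrightarrow> y \<in> I \<Longrightarrow> x + y \<in> I" using add by blast
  show "r \<in> S \<Longrightarrow> x \<in> I \<Longrightarrow> r * x \<in> I" using mult by blast
  show "r \<in> S \<Longrightarrow> x \<in> I \<Longrightarrow> x * r \<in> I" using mult by (simp add: mult.commute)
  show "x \<in> I \<Longrightarrow> - x \<in> I" by (rule neg)
  show "x \<in> I \<Longrightarrow> y \<in> I \<Longrightarrow> x - y \<in> I" using add neg[of y] by fastforce
qed

lemma sr_ideal_one_UNIV:
  assumes I: "sr_ideal UNIV I" and one: "1 \<in> I"
  shows "I = UNIV"
proof -
  have "y * 1 \<in> I" for y using sr_ideal_mult_left[OF sr_subring_UNIV I _ one] by simp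
  then show ?thesis by auto
qed

lemma sr_ideal_principal: "sr_ideal (UNIV :: 'a::comm_ring_1 set) (range ((*) x))"
  unfolding sr_ideal_def
proof (intro conjI ballI)
  show "range ((*) x) \<subseteq> UNIV" "0 \<in> range ((*) x)" by (auto intro: range_eqI[of _ _ 0])
  fix u v assume "u \<in> range ((*) x)" "v \<in> range ((*) x)"
  then show "u + v \<in> range ((*) x)" by (auto simp: distrib_left[symmetric])
next
  fix r u assume "u \<in> range ((*) x)"
  then show "r * u \<in> range ((*) x)" by (auto simp: mult.left_commute[of r])
qed

lemma sr_ideal_chain_Union:
  assumes "C \<noteq> {}" and ideals: "\<forall>I\<in>C. sr_ideal S I" and chain: "\<forall>I\<in>C. \<forall>J\<in>C. I \<subseteq> J \<or> J \<subseteq> I"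
  shows "sr_ideal S (\<Union>C)"
  unfolding sr_ideal_def
proof (intro conjI ballI)
  show "\<Union>C \<subseteq> S" "0 \<in> \<Union>C" using assms(1) ideals by (auto simp: sr_ideal_def)
  fix x y assume "x \<in> \<Union>C" "y \<in> \<Union>C"
  then obtain I J where "I \<in> C" "J \<in> C" "x \<in> I" "y \<in> J" by blast
  with chain obtain K where "K \<in> C" "x \<in> K" "y \<in> K" by blast
  then show "x + y \<in> \<Union>C" using ideals by (auto simp: sr_ideal_def)
next
  fix r x assume "r \<in> S" "x \<in> \<Union>C"
  then obtain I where "I \<in> C" "r * x \<in> I" using ideals unfolding sr_ideal_def by blast
  then show "r * x \<in> \<Union>C" by blast
qed

lemma sr_ideal_gen_base:
  assumes "1 \<in> S" and "x \<in> X"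
  shows "x \<in> sr_ideal_gen S X"
  unfolding sr_ideal_gen_def
  by (rule CollectI, rule exI[of _ "1::nat"], rule exI[of _ "\<lambda>_. 1"], rule exI[of _ "\<lambda>_. x"])
     (use assms in simp)

lemma sr_ideal_gen_principal:
  assumes S: "sr_subring S" and X: "X \<subseteq> {0, x}" and y: "y \<in> sr_ideal_gen S X"
  shows "\<exists>r\<in>S. y = r * x"
proof -
  obtain n :: nat and r z where rz: "\<forall>i<n. r i \<in> S \<and> z i \<in> X" and y_eq: "y = (\<Sum>i<n. r i * z i)"
    using y by (auto simp: sr_ideal_gen_def)
  define R where "R = (\<Sum>i<n. if z i = x then r i else 0)"
  have "R \<in> S"
    unfolding R_def using rz S by (intro sr_subring_sum) (auto simp: sr_subring_def)
  moreover have "y = R * x"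
    unfolding y_eq R_def sum_distrib_right using rz X by (intro sum.cong) auto
  ultimately show ?thesis by blast
qed

lemma ring_hom_on_closed:
  assumes A: "sr_subring A" and f: "ring_hom_on A f"
  shows ring_hom_on_one: "f 1 = 1"
    and ring_hom_on_add: "x \<in> A \<Longrightarrow> y \<in> A \<Longrightarrow> f (x + y) = f x + f y"
    and ring_hom_on_mult: "x \<in> A \<Longrightarrow> y \<in> A \<Longrightarrow> f (x * y) = f x * f y"
    and ring_hom_on_zero: "f 0 = 0"
    and ring_hom_on_diff: "x \<in> A \<Longrightarrow> y \<in> A \<Longrightarrow> f (x - y) = f x - f y"
proof -
  show "f 1 = 1" using f by (simp add: ring_hom_on_def)
  show add: "\<And>x y. x \<in> A \<Longrightarrow> y \<in> A \<Longrightarrow> f (x + y) = f x + f y"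
    using f by (simp add: ring_hom_on_def)
  show "\<And>x y. x \<in> A \<Longrightarrow> y \<in> A \<Longrightarrow> f (x * y) = f x * f y"
    using f by (simp add: ring_hom_on_def)
  have "0 \<in> A" using A by (simp add: sr_subring_def)
  then show "f 0 = 0" using add[of 0 0] by simp
  assume "x \<in> A" "y \<in> A"
  then have "x - y \<in> A" using A by (simp add: sr_subring_def)
  then have "f (x - y) + f y = f x" using add[of "x - y" y] \<open>y \<in> A\<close> by simp
  then show "f (x - y) = f x - f y" by (simp add: eq_diff_eq)
qed

(* A ring whose regular elements are units is Pruefer: a regular ideal contains a unit, hence 1,
   and the unit ideal is invertible (denominator 1 and the single product 1 * 1). *)
lemma pruefer_if_regular_units:
  assumes one: "1 \<in> S" and units: "\<And>s. regular S s \<Longrightarrow> \<exists>d\<in>S. s * d = 1"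
  shows "pruefer_ring S"
  unfolding pruefer_ring_def
proof (intro allI impI)
  fix I assume "fin_gen_ideal S I \<and> regular_ideal S I"
  then obtain s where I: "sr_ideal S I" and s: "s \<in> I" "regular S s"
    by (auto simp: regular_ideal_def)
  obtain d where "d \<in> S" "s * d = 1" using units[OF s(2)] by blast
  then have one_I: "1 \<in> I" using I s(1) unfolding sr_ideal_def by (metis mult.commute)
  have reg_one: "regular S 1" using one by (simp add: regular_def zero_divisors_def)
  have "\<forall>i<1::nat. 1 \<in> I \<and> 1 \<in> S \<and> (\<forall>c\<in>I. \<exists>r\<in>S. 1 * c = 1 * r)"
    using one_I one I by (auto simp: sr_ideal_def)
  then show "invertible_ideal S I"
    using I reg_one unfolding invertible_ideal_def by fastforce
qed

(* If ac = bd = 0, then (a + bX)(c + dX) = (ad + bc)X; in a Gaussian ring its content contains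
   the product ad of content generators, so ad is a multiple of ad + bc. *)
lemma gaussian_ring_divides:
  assumes S: "sr_subring S" and G: "gaussian_ring S"
    and in_S: "a \<in> S" "b \<in> S" "c \<in> S" "d \<in> S" and ac: "a * c = 0" and bd: "b * d = 0"
  shows "\<exists>r\<in>S. a * d = r * (a * d + b * c)"
proof -
  define g where "g = [:a, b:]"
  define h where "h = [:c, d:]"
  have gh: "g * h = [:0, a * d + b * c:]"
    using ac bd by (simp add: g_def h_def algebra_simps)
  have coeffs: "range (coeff g) \<subseteq> S" "range (coeff h) \<subseteq> S"
    using in_S S by (auto simp: g_def h_def coeff_pCons sr_subring_def split: nat.split)
  have one: "1 \<in> S" using S by (simp add: sr_subring_def)
  have "a = coeff g 0" "d = coeff h 1" by (simp_all add: g_def h_def)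
  then have "a \<in> content_ideal S g" "d \<in> content_ideal S h"
    unfolding content_ideal_def using one by (auto intro: sr_ideal_gen_base)
  then have "a * d \<in> sr_ideal_prod S (content_ideal S g) (content_ideal S h)"
    unfolding sr_ideal_prod_def using one by (blast intro: sr_ideal_gen_base)
  then have "a * d \<in> sr_ideal_gen S (range (coeff (g * h)))"
    using G coeffs unfolding gaussian_ring_def content_ideal_def by blast
  moreover have "range (coeff (g * h)) \<subseteq> {0, a * d + b * c}"
    by (auto simp: gh coeff_pCons split: nat.split)
  ultimately show ?thesis using sr_ideal_gen_principal[OF S] by blast
qed

lemma local_ring_ideal:
  assumes "local_ring UNIV m"
  shows "sr_ideal UNIV m" and "1 \<notin> m"
  using assms sr_ideal_one_UNIV by (auto simp: local_ring_def maximal_ideal_def)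

(* In a local ring every element outside the maximal ideal is a unit: otherwise Zorn's lemma
   yields a maximal ideal containing it, which must be the unique maximal ideal. *)
lemma local_ring_unit:
  assumes loc: "local_ring UNIV m" and x: "x \<notin> m"
  shows "\<exists>y. x * y = 1"
proof (rule ccontr)
  assume no_inv: "\<nexists>y. x * y = 1"
  define \<I> where "\<I> = {I. sr_ideal (UNIV :: 'a set) I \<and> x \<in> I \<and> 1 \<notin> I}"
  have "range ((*) x) \<in> \<I>"
    using no_inv sr_ideal_principal unfolding \<I>_def by (auto intro: range_eqI[of _ _ 1])
  moreover have "\<Union>C \<in> \<I>" if "C \<noteq> {}" and "subset.chain \<I> C" for C
    using that sr_ideal_chain_Union[of C UNIV] unfolding \<I>_def subset.chain_def by blast
  ultimately obtain M where M: "M \<in> \<I>" and max: "\<forall>N\<in>\<I>. M \<subseteq> N \<longrightarrow> N = M"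
    using subset_Zorn_nonempty[of \<I>] by blast
  have "maximal_ideal UNIV M"
    unfolding maximal_ideal_def
  proof (intro conjI allI impI)
    show "sr_ideal UNIV M" "M \<noteq> UNIV" using M by (auto simp: \<I>_def)
    fix N assume N: "sr_ideal UNIV N \<and> M \<subseteq> N"
    show "N = M \<or> N = UNIV"
    proof (cases "1 \<in> N")
      case True then show ?thesis using N sr_ideal_one_UNIV by blast
    next
      case False then show ?thesis using N M max by (auto simp: \<I>_def)
    qed
  qed
  then have "M = m" using loc by (simp add: local_ring_def)
  then show False using M x by (simp add: \<I>_def)
qed

lemma amalg_dup_iff: "a \<in> amalg_dup B I \<longleftrightarrow> fst a \<in> B \<and> snd a - fst a \<in> I"
  by (cases a) (force simp: amalg_dup_def)

lemma amalg_iff: "c \<in> amalg A f J \<longleftrightarrow> fst c \<in> A \<and> snd c - f (fst c) \<in> J"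
  by (cases c) (force simp: amalg_def)

lemma sr_subring_amalg_dup:
  assumes B: "sr_subring B" and I: "sr_ideal B I"
  shows "sr_subring (amalg_dup B I)"
  unfolding sr_subring_def
proof (intro conjI ballI)
  have B_closed: "x \<in> B \<Longrightarrow> y \<in> B \<Longrightarrow> x + y \<in> B \<and> x - y \<in> B \<and> x * y \<in> B" for x y
    using B by (simp add: sr_subring_def)
  show "0 \<in> amalg_dup B I" "1 \<in> amalg_dup B I"
    using B sr_ideal_zero[OF B I] by (simp_all add: amalg_dup_iff sr_subring_def one_Pair)
  fix x y assume x: "x \<in> amalg_dup B I" and y: "y \<in> amalg_dup B I"
  then have fst: "fst x \<in> B" "fst y \<in> B" and diff: "snd x - fst x \<in> I" "snd y - fst y \<in> I"
    by (simp_all add: amalg_dup_iff)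
  have "snd y = fst y + (snd y - fst y)" by simp
  then have snd_y: "snd y \<in> B" using fst(2) diff(2) I B_closed unfolding sr_ideal_def by (metis subsetD)
  have e_add: "snd (x + y) - fst (x + y) = (snd x - fst x) + (snd y - fst y)"
    and e_diff: "snd (x - y) - fst (x - y) = (snd x - fst x) - (snd y - fst y)"
    and e_mult: "snd (x * y) - fst (x * y) = (snd x - fst x) * snd y + fst x * (snd y - fst y)"
    by (simp_all add: algebra_simps)
  have "snd (x + y) - fst (x + y) \<in> I" "snd (x - y) - fst (x - y) \<in> I"
    "snd (x * y) - fst (x * y) \<in> I"
    unfolding e_add e_diff e_mult
    by (rule sr_ideal_add[OF B I diff], rule sr_ideal_diff[OF B I diff],
        rule sr_ideal_add[OF B I sr_ideal_mult_right[OF B I snd_y diff(1)]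
          sr_ideal_mult_left[OF B I fst(1) diff(2)]])
  then show "x + y \<in> amalg_dup B I" "x - y \<in> amalg_dup B I" "x * y \<in> amalg_dup B I"
    using fst B_closed by (simp_all add: amalg_dup_iff)
qed

lemma amalg_graph: "sr_ideal UNIV J \<Longrightarrow> a \<in> A \<Longrightarrow> (a, f a) \<in> amalg A f J"
  by (simp add: amalg_iff sr_ideal_def)

lemma sr_subring_amalg:
  assumes A: "sr_subring A" and f: "ring_hom_on A f" and J: "sr_ideal UNIV J"
  shows "sr_subring (amalg A f J)"
  unfolding sr_subring_def
proof (intro conjI ballI)
  note U = sr_subring_UNIV
  note hom = ring_hom_on_closed[OF A f]
  have A_closed: "x \<in> A \<Longrightarrow> y \<in> A \<Longrightarrow> x + y \<in> A \<and> x - y \<in> A \<and> x * y \<in> A" for x y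
    using A by (simp add: sr_subring_def)
  show "0 \<in> amalg A f J" "1 \<in> amalg A f J"
    using A sr_ideal_zero[OF U J] hom(1,4) by (simp_all add: amalg_iff sr_subring_def)
  fix x y assume x: "x \<in> amalg A f J" and y: "y \<in> amalg A f J"
  then have fst: "fst x \<in> A" "fst y \<in> A" and diff: "snd x - f (fst x) \<in> J" "snd y - f (fst y) \<in> J"
    by (simp_all add: amalg_iff)
  have e_add: "snd (x + y) - f (fst (x + y)) = (snd x - f (fst x)) + (snd y - f (fst y))"
    and e_diff: "snd (x - y) - f (fst (x - y)) = (snd x - f (fst x)) - (snd y - f (fst y))"
    and e_mult: "snd (x * y) - f (fst (x * y))
        = (snd x - f (fst x)) * snd y + f (fst x) * (snd y - f (fst y))"
    using hom(2,3,5)[OF fst] by (simp_all add: algebra_simps)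
  have "snd (x + y) - f (fst (x + y)) \<in> J" "snd (x - y) - f (fst (x - y)) \<in> J"
    "snd (x * y) - f (fst (x * y)) \<in> J"
    unfolding e_add e_diff e_mult
    by (rule sr_ideal_add[OF U J diff], rule sr_ideal_diff[OF U J diff],
        rule sr_ideal_add[OF U J sr_ideal_mult_right[OF U J UNIV_I diff(1)]
          sr_ideal_mult_left[OF U J UNIV_I diff(2)]])
  then show "x + y \<in> amalg A f J" "x - y \<in> amalg A f J" "x * y \<in> amalg A f J"
    using fst A_closed by (simp_all add: amalg_iff)
qed

section \<open>The amalgamation (B \<bowtie> m) \<bowtie>^f m\<close>

(* The hypotheses of the theorem, except that B is Pruefer, which the argument does not need. *)
locale duplication_amalgamation =
  fixes m :: "'b::comm_ring_1 set" and f :: "'b \<times> 'b \<Rightarrow> 'b"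
  assumes local: "local_ring UNIV m"
    and m_zero_divisors: "m = zero_divisors UNIV"
    and m_square: "sr_ideal_prod UNIV m m \<noteq> {0}"
    and hom: "ring_hom_on (amalg_dup UNIV m) f"
    and surj: "f ` amalg_dup UNIV m = UNIV"
begin

abbreviation A :: "('b \<times> 'b) set" where "A \<equiv> amalg_dup UNIV m"
abbreviation C :: "(('b \<times> 'b) \<times> 'b) set" where "C \<equiv> amalg A f m"

lemma m_ideal: "sr_ideal UNIV m" and one_notin_m: "1 \<notin> m"
  using local_ring_ideal[OF local] by blast+

lemmas m_zero = sr_ideal_zero[OF sr_subring_UNIV m_ideal]
lemmas m_add = sr_ideal_add[OF sr_subring_UNIV m_ideal]
lemmas m_mult = sr_ideal_mult_left[OF sr_subring_UNIV m_ideal UNIV_I]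
lemmas m_mult_right = sr_ideal_mult_right[OF sr_subring_UNIV m_ideal UNIV_I]
lemmas m_uminus = sr_ideal_uminus[OF sr_subring_UNIV m_ideal]
lemmas m_diff = sr_ideal_diff[OF sr_subring_UNIV m_ideal]

lemmas unit_outside_m = local_ring_unit[OF local]

lemma unit_notin_m: "x * y = 1 \<Longrightarrow> x \<notin> m"
  using m_mult_right[of x y] one_notin_m by auto

lemma zero_divisor_iff: "x \<in> m \<longleftrightarrow> (\<exists>y. y \<noteq> 0 \<and> x * y = 0)"
  using m_zero_divisors by (auto simp: zero_divisors_def)

lemma m_square_nonzero: "\<exists>p\<in>m. \<exists>q\<in>m. p * q \<noteq> 0"
proof (rule ccontr)
  assume "\<not> ?thesis"
  then have products: "{a * b | a b. a \<in> m \<and> b \<in> m} \<subseteq> {0, 0}" by auto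
  have "y = 0" if "y \<in> sr_ideal_prod UNIV m m" for y
    using sr_ideal_gen_principal[OF sr_subring_UNIV products] that
    unfolding sr_ideal_prod_def by auto
  then have "sr_ideal_prod UNIV m m \<subseteq> {0}" by blast
  moreover have "0 \<in> sr_ideal_prod UNIV m m"
    unfolding sr_ideal_prod_def using m_zero by (intro sr_ideal_gen_base) force+
  ultimately show False using m_square by blast
qed

lemma annihilator_in_m:
  assumes x: "x \<in> m"
  shows "\<exists>z\<in>m. z \<noteq> 0 \<and> x * z = 0"
proof -
  obtain y where y: "y \<noteq> 0" "x * y = 0" using x zero_divisor_iff by blast
  show ?thesis
  proof (cases "y \<in> m")
    case True then show ?thesis using y by blast
  next
    case False
    then obtain w where "y * w = 1" using unit_outside_m by blast
    then have "x = 0" using y(2) by (metis mult.assoc mult.right_neutral mult_zero_left)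
    moreover obtain p q where "p \<in> m" "q \<in> m" "p * q \<noteq> 0" using m_square_nonzero by blast
    then have "p \<in> m" "p \<noteq> 0" by auto
    ultimately show ?thesis by auto
  qed
qed

lemma A_subring: "sr_subring A"
  by (rule sr_subring_amalg_dup[OF sr_subring_UNIV m_ideal])

lemma C_subring: "sr_subring C"
  by (rule sr_subring_amalg[OF A_subring hom m_ideal])

lemma A_zero: "0 \<in> A" and A_one: "1 \<in> A"
  and A_mult: "a \<in> A \<Longrightarrow> b \<in> A \<Longrightarrow> a * b \<in> A" and A_diff: "a \<in> A \<Longrightarrow> b \<in> A \<Longrightarrow> a - b \<in> A"
  using A_subring by (simp_all add: sr_subring_def)

lemmas f_one = ring_hom_on_one[OF A_subring hom]
lemmas f_zero = ring_hom_on_zero[OF A_subring hom]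
lemmas f_mult = ring_hom_on_mult[OF A_subring hom]
lemmas f_diff = ring_hom_on_diff[OF A_subring hom]

(* A is local with maximal ideal {a. fst a \<in> m}: if fst a is a unit of B, so is snd a
   (they differ by an element of m), and the pair of inverses lies in A. *)
lemma A_unit:
  assumes a: "a \<in> A" and na: "fst a \<notin> m"
  shows "\<exists>a'\<in>A. a * a' = 1"
proof -
  have diff: "snd a - fst a \<in> m" using a by (simp add: amalg_dup_iff)
  obtain u where u: "fst a * u = 1" using unit_outside_m[OF na] by blast
  have "snd a \<notin> m"
  proof
    assume "snd a \<in> m"
    then have "snd a - (snd a - fst a) \<in> m" using diff m_diff by blast
    then show False using na by simp
  qed
  then obtain v where v: "snd a * v = 1" using unit_outside_m by blast
  have "(u * v) * - (snd a - fst a) = v * (fst a * u) - u * (snd a * v)"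
    by (simp add: algebra_simps)
  also have "\<dots> = v - u" using u v by simp
  finally have "v - u \<in> m" using m_mult[OF m_uminus[OF diff]] by metis
  then have "(u, v) \<in> A" by (simp add: amalg_dup_iff)
  moreover have "a * (u, v) = 1" using u v by (simp add: prod_eq_iff)
  ultimately show ?thesis by blast
qed

(* f maps the maximal ideal of A into m: otherwise surjectivity gives b with f (a * b) = 1,
   and then the unit 1 - a * b of A would be mapped to 0. *)
lemma f_maximal:
  assumes a: "a \<in> A" and ma: "fst a \<in> m"
  shows "f a \<in> m"
proof (rule ccontr)
  assume "f a \<notin> m"
  then obtain u where u: "f a * u = 1" using unit_outside_m by blast
  obtain b where b: "b \<in> A" "f b = u" using surj by (metis UNIV_I imageE)
  have ab: "a * b \<in> A" and d: "1 - a * b \<in> A" using A_mult[OF a b(1)] A_diff A_one by blast+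
  have "fst (1 - a * b) \<notin> m"
  proof
    assume "fst (1 - a * b) \<in> m"
    moreover have "fst (a * b) \<in> m" using ma m_mult_right by simp
    ultimately have "fst (1 - a * b) + fst (a * b) \<in> m" using m_add by blast
    then show False using one_notin_m by simp
  qed
  then obtain e where "(1 - a * b) * e = 1" "e \<in> A" using A_unit[OF d] by blast
  then have "f (1 - a * b) * f e = 1" using f_mult[OF d] f_one by metis
  moreover have "f (1 - a * b) = 0" using f_diff[OF A_one ab] f_mult[OF a b(1)] b(2) u f_one by simp
  ultimately show False using m_zero one_notin_m by force
qed

lemma C_regular_unit:
  assumes reg: "regular C c"
  shows "\<exists>d\<in>C. c * d = 1"
proof -
  have c: "c \<in> C" and not_zd: "c \<notin> zero_divisors C" using reg by (auto simp: regular_def)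
  then have a: "fst c \<in> A" and j: "snd c - f (fst c) \<in> m" by (simp_all add: amalg_iff)
  show ?thesis
  proof (cases "fst (fst c) \<in> m")
    case True
    have "(snd c - f (fst c)) + f (fst c) \<in> m" using j f_maximal[OF a True] m_add by blast
    then obtain z where z: "z \<in> m" "z \<noteq> 0" "snd c * z = 0" using annihilator_in_m by force
    have "(0, z) \<in> C" using z(1) A_zero f_zero by (simp add: amalg_iff)
    moreover have "c * (0, z) = 0" and "(0, z) \<noteq> (0 :: ('b \<times> 'b) \<times> 'b)"
      using z by (simp_all add: prod_eq_iff)
    ultimately have "c \<in> zero_divisors C" using c unfolding zero_divisors_def by blast
    then show ?thesis using not_zd by blast
  next
    case False
    obtain a' where a': "a' \<in> A" "fst c * a' = 1" using A_unit[OF a False] by blast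
    have fa: "f (fst c) * f a' = 1" using f_mult[OF a a'(1)] a'(2) f_one by simp
    have "snd c \<notin> m"
    proof
      assume "snd c \<in> m"
      then have "snd c - (snd c - f (fst c)) \<in> m" using j m_diff by blast
      then show False using unit_notin_m[OF fa] by simp
    qed
    then obtain w where w: "snd c * w = 1" using unit_outside_m by blast
    have "- (w * f a') * (snd c - f (fst c)) = w * (f (fst c) * f a') - f a' * (snd c * w)"
      by (simp add: algebra_simps)
    also have "\<dots> = w - f a'" using fa w by simp
    finally have "w - f a' \<in> m" using m_mult[OF j] by metis
    then have "(a', w) \<in> C" using a'(1) by (simp add: amalg_iff)
    moreover have "c * (a', w) = 1" using a'(2) w by (simp add: prod_eq_iff)
    ultimately show ?thesis by blast
  qed
qed

lemma C_pruefer: "pruefer_ring C"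
  using C_subring C_regular_unit by (intro pruefer_if_regular_units) (simp_all add: sr_subring_def)

(* With p, q \<in> m and pq <> 0, take a = (p, 0), b = (0, p), c = (0, q), d = (q, 0) on the graph
   of f.  A relation ad = r (ad + bc) gives pq = r1 pq and 0 = r2 pq for the two first coordinates
   r1, r2 of r; since r1 - r2 \<in> m, the element 1 - (r1 - r2) would be a unit killing pq. *)
lemma C_not_gaussian: "\<not> gaussian_ring C"
proof
  assume G: "gaussian_ring C"
  obtain p q where p: "p \<in> m" and q: "q \<in> m" and pq: "p * q \<noteq> 0" using m_square_nonzero by blast
  have in_A: "(p, 0) \<in> A" "(0, p) \<in> A" "(q, 0) \<in> A" "(0, q) \<in> A"
    using p q m_uminus by (simp_all add: amalg_dup_iff)
  define a b c d where "a = (((p, 0) :: 'b \<times> 'b), f (p, 0))" and "b = (((0, p) :: 'b \<times> 'b), f (0, p))"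
    and "c = (((0, q) :: 'b \<times> 'b), f (0, q))" and "d = (((q, 0) :: 'b \<times> 'b), f (q, 0))"
  have in_C: "a \<in> C" "b \<in> C" "c \<in> C" "d \<in> C"
    unfolding a_def b_def c_def d_def using in_A amalg_graph[OF m_ideal] by blast+
  have f00: "f (0, 0) = 0" using f_zero by (simp add: zero_prod_def)
  have "a * c = 0" "b * d = 0"
    using f_mult[OF in_A(1,4)] f_mult[OF in_A(2,3)] f00
    by (simp_all add: a_def b_def c_def d_def zero_prod_def)
  then obtain r where r: "r \<in> C" "a * d = r * (a * d + b * c)"
    using gaussian_ring_divides[OF C_subring G in_C] by blast
  obtain r1 r2 r3 where r_eq: "r = ((r1, r2), r3)" by (metis prod.collapse)
  have r1: "r1 * (p * q) = p * q" and r2: "r2 * (p * q) = 0"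
    using r(2) by (simp_all add: r_eq a_def b_def c_def d_def prod_eq_iff)
  have "r2 - r1 \<in> m" using r(1) by (simp add: r_eq amalg_iff amalg_dup_iff)
  then have "r1 - r2 \<in> m" using m_uminus by fastforce
  then have "1 - (r1 - r2) \<notin> m" using m_add[of "1 - (r1 - r2)" "r1 - r2"] one_notin_m by auto
  moreover have "(1 - (r1 - r2)) * (p * q) = p * q - r1 * (p * q) + r2 * (p * q)"
    by (simp add: algebra_simps)
  then have "(1 - (r1 - r2)) * (p * q) = 0" using r1 r2 by simp
  ultimately show False using zero_divisor_iff pq by blast
qed

end

theorem mainTheorem8:
  fixes m :: "'b::comm_ring_1 set"
    and f :: "'b \<times> 'b \<Rightarrow> 'b"
  assumes "local_ring (UNIV :: 'b set) m"
    and "pruefer_ring (UNIV :: 'b set)"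
    and "m = zero_divisors (UNIV :: 'b set)"
    and "sr_ideal_prod (UNIV :: 'b set) m m \<noteq> {0}"
    and "ring_hom_on (amalg_dup UNIV m) f"
    and "f ` amalg_dup UNIV m = UNIV"
  shows "pruefer_ring (amalg (amalg_dup UNIV m) f m) \<and>
         \<not> gaussian_ring (amalg (amalg_dup UNIV m) f m)"
proof -
  interpret duplication_amalgamation m f
    using assms(1,3-6) by unfold_locales
  show ?thesis using C_pruefer C_not_gaussian by blast
qed

end
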